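(* Let $0<\delta<2$, $\eta=2\delta-\delta^2$. If $\mu_1<1$ choose $0<\zeta<\frac{4\eta\mu_1}{(1-\mu_1)^2}$; otherwise choose any $\zeta>0$. Set $\gamma=\sqrt{\zeta\eta\mu_1}$, $\alpha=\frac{\eta}{\eta+\gamma}$, and $\omega=1-\frac{\zeta\mu_1^2+2\gamma\mu_1-\zeta\mu_1}{1+\zeta\mu_1^2}$. Let $\{x_k\},\{v_k\}$ be generated by the PASKM method (defined in the context) from $x_0$ with these parameters. Then $\{v_k\},\{x_k\}$ converge and for all $k\ge0$ $$\mathbb{E}\big[d(v_{k+1},P)^2+\zeta\mu_1 d(x_{k+1},P)^2\big]\le\omega^{k+1}\,\mathbb{E}\big[d(v_0,P)^2+\zeta\mu_1 d(x_0,P)^2\big]=(1+\zeta\mu_1)\,\omega^{k+1}d(x_0,P)^2;$$ i.e., PASKM converges linearly with rate $\omega$.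
   Context: Let $A\in\mathbb{R}^{m\times n}$ have rows $a_1^T,\dots,a_m^T$ with $\|a_i\|_2=1$, and $b\in\mathbb{R}^m$; assume $Ax\le b$ is consistent and let $P=\{x:Ax\le b\}$, $\mathcal{P}(x)$ the Euclidean projection onto $P$, $d(x,P)=\|x-\mathcal{P}(x)\|$, $t^+=\max\{t,0\}$. Fix an integer $1\le\beta\le m$. Let $L>0$ be a Hoffman constant ($d(x,P)^2\le L^2\|(Ax-b)^+\|^2$ for all $x$) and $\mu_1=\frac1{mL^2}$. PASKM method (parameters $\beta,\delta,\alpha,\omega,\gamma$): given $x_0$, set $v_0=x_0$. For $k=0,1,\dots$: $y_k=\alpha v_k+(1-\alpha)x_k$; choose $\tau_k\subseteq\{1,\dots,m\}$ with $|\tau_k|=\beta$ uniformly at random, independently; let $i^*_k\in\tau_k$ maximize $(a_i^Ty_k-b_i)^+$; with $r_k=(a_{i^*_k}^Ty_k-b_{i^*_k})^+$ set $x_{k+1}=y_k-\delta r_k a_{i^*_k}$ and $v_{k+1}=\omega v_k+(1-\omega)y_k-\gamma r_k a_{i^*_k}$. $\mathbb{E}$ denotes total expectation. *)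

theory Defs
  imports "HOL-Analysis.Analysis" "HOL-Probability.Probability"
begin

definition pos :: "real \<Rightarrow> real" where
  "pos t = max t 0"

definition polyh :: "nat \<Rightarrow> (nat \<Rightarrow> 'a::euclidean_space) \<Rightarrow> (nat \<Rightarrow> real) \<Rightarrow> 'a set" where
  "polyh m a b = {x. \<forall>i<m. a i \<bullet> x \<le> b i}"

definition dist_P :: "'a::euclidean_space set \<Rightarrow> 'a \<Rightarrow> real" where
  "dist_P P x = norm (x - closest_point P x)"

definition samples :: "nat \<Rightarrow> nat \<Rightarrow> nat set set" where
  "samples m \<beta> = {\<tau>. \<tau> \<subseteq> {..<m} \<and> card \<tau> = \<beta>}"

text \<open>One PASKM step from (x_k, v_k) with sampled set tau; sel y tau is the chosen
  maximizing index i*_k.\<close>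
definition paskm_step ::
  "(nat \<Rightarrow> 'a::euclidean_space) \<Rightarrow> (nat \<Rightarrow> real) \<Rightarrow> ('a \<Rightarrow> nat set \<Rightarrow> nat) \<Rightarrow>
   real \<Rightarrow> real \<Rightarrow> real \<Rightarrow> real \<Rightarrow> nat set \<Rightarrow> 'a \<times> 'a \<Rightarrow> 'a \<times> 'a" where
  "paskm_step a b sel \<delta> \<alpha> \<omega> \<gamma> \<tau> xv =
     (let x = fst xv; v = snd xv;
          y = \<alpha> *\<^sub>R v + (1 - \<alpha>) *\<^sub>R x;
          i = sel y \<tau>;
          r = pos (a i \<bullet> y - b i)
      in (y - (\<delta> * r) *\<^sub>R a i,
          \<omega> *\<^sub>R v + (1 - \<omega>) *\<^sub>R y - (\<gamma> * r) *\<^sub>R a i))"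

text \<open>The iterate (x_k, v_k) given the realized sample sets ts 0, ts 1, ...\<close>
fun paskm ::
  "(nat \<Rightarrow> 'a::euclidean_space) \<Rightarrow> (nat \<Rightarrow> real) \<Rightarrow> ('a \<Rightarrow> nat set \<Rightarrow> nat) \<Rightarrow>
   real \<Rightarrow> real \<Rightarrow> real \<Rightarrow> real \<Rightarrow> 'a \<Rightarrow> (nat \<Rightarrow> nat set) \<Rightarrow> nat \<Rightarrow> 'a \<times> 'a" where
  "paskm a b sel \<delta> \<alpha> \<omega> \<gamma> x0 ts 0 = (x0, x0)"
| "paskm a b sel \<delta> \<alpha> \<omega> \<gamma> x0 ts (Suc k) =
     paskm_step a b sel \<delta> \<alpha> \<omega> \<gamma> (ts k) (paskm a b sel \<delta> \<alpha> \<omega> \<gamma> x0 ts k)"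

definition sample_seq :: "nat \<Rightarrow> nat \<Rightarrow> nat \<Rightarrow> (nat \<Rightarrow> nat set) pmf" where
  "sample_seq m \<beta> k = Pi_pmf {..<k} {} (\<lambda>_. pmf_of_set (samples m \<beta>))"

definition paskm_E ::
  "nat \<Rightarrow> nat \<Rightarrow> (nat \<Rightarrow> 'a::euclidean_space) \<Rightarrow> (nat \<Rightarrow> real) \<Rightarrow> ('a \<Rightarrow> nat set \<Rightarrow> nat) \<Rightarrow>
   real \<Rightarrow> real \<Rightarrow> real \<Rightarrow> real \<Rightarrow> 'a \<Rightarrow> nat \<Rightarrow> ('a \<times> 'a \<Rightarrow> real) \<Rightarrow> real" where
  "paskm_E m \<beta> a b sel \<delta> \<alpha> \<omega> \<gamma> x0 k f =
     measure_pmf.expectation (sample_seq m \<beta> k) (\<lambda>ts. f (paskm a b sel \<delta> \<alpha> \<omega> \<gamma> x0 ts k))"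

end

(* Phi(x, v) = d(v,P)^2 + zeta mu1 d(x,P)^2 is a Lyapunov function for PASKM.  Comparing
   x_{k+1} with the projection p of y_k, and v_{k+1} with the feasible point
   omega proj(v_k) + (1 - omega) p, gives the deterministic estimate
     Phi(x_{k+1}, v_{k+1}) <= omega Phi(x_k, v_k) + K (mu1 d(y_k,P)^2 - r_k^2)
   with K = 2 gamma + omega zeta mu1 >= 0; the parameter choice is exactly what makes the
   coefficient of d(y_k,P)^2 equal to mu1 K.  Every row lies in (m-1 choose beta-1) of the
   (m choose beta) samples, so the mean square of the sampled maximal residual r_k dominates
   the mean square of all residuals, which by Hoffman's bound dominates mu1 d(y_k,P)^2.
   Hence Phi contracts by omega in conditional expectation, and the bound on zeta makes
   omega < 1. *)
theory Submission
  imports Defs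
begin

subsection \<open>Geometry of the feasible polyhedron\<close>

lemma polyh_eq_INT: "polyh m a b = (\<Inter>i\<in>{..<m}. {x. a i \<bullet> x \<le> b i})"
  by (auto simp: polyh_def)

lemma closed_polyh: "closed (polyh m a b)"
  unfolding polyh_eq_INT by (auto intro!: closed_INT closed_halfspace_le)

lemma convex_polyh: "convex (polyh m a b)"
  unfolding polyh_eq_INT by (auto intro!: convex_INT convex_halfspace_le)

lemma closest_point_in_polyh: "polyh m a b \<noteq> {} \<Longrightarrow> closest_point (polyh m a b) x \<in> polyh m a b"
  using closest_point_in_set closed_polyh by blast

lemma dist_P_nonneg: "0 \<le> dist_P P x"
  by (simp add: dist_P_def)

lemma dist_P_polyh_le: "q \<in> polyh m a b \<Longrightarrow> dist_P (polyh m a b) x \<le> norm (x - q)"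
  using closest_point_le[OF closed_polyh, of q m a b x] by (simp add: dist_P_def dist_norm)

lemma residual_le_inner_diff: "i < m \<Longrightarrow> q \<in> polyh m a b \<Longrightarrow> a i \<bullet> z - b i \<le> a i \<bullet> (z - q)"
  by (auto simp: polyh_def inner_diff_right)

lemma residual_le_dist_P:
  assumes "i < m" "norm (a i) = 1" "polyh m a b \<noteq> {}"
  shows "a i \<bullet> z - b i \<le> dist_P (polyh m a b) z"
proof -
  let ?q = "closest_point (polyh m a b) z"
  have "a i \<bullet> z - b i \<le> a i \<bullet> (z - ?q)"
    using assms residual_le_inner_diff closest_point_in_polyh by blast
  also have "\<dots> \<le> norm (z - ?q)"
    using norm_cauchy_schwarz[of "a i" "z - ?q"] assms(2) by simp
  finally show ?thesis by (simp add: dist_P_def)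
qed

lemma pos_residual_le_dist_P:
  "i < m \<Longrightarrow> norm (a i) = 1 \<Longrightarrow> polyh m a b \<noteq> {} \<Longrightarrow>
    pos (a i \<bullet> z - b i) \<le> dist_P (polyh m a b) z"
  using residual_le_dist_P by (simp add: pos_def dist_P_nonneg)

text \<open>This is what gives \<open>\<mu>1 \<le> 1\<close>. Test the bound at a point violating the first
  constraint: there every residual is at most the (positive) distance.\<close>
lemma hoffman_constant_ge:
  assumes unit_rows: "\<forall>i<m. norm (a i) = 1" and consistent: "polyh m a b \<noteq> {}" and "0 < m"
    and hoffman: "\<forall>x. (dist_P (polyh m a b) x)\<^sup>2 \<le> L\<^sup>2 * (\<Sum>i<m. (pos (a i \<bullet> x - b i))\<^sup>2)"
  shows "1 \<le> L\<^sup>2 * real m"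
proof -
  let ?P = "polyh m a b"
  obtain q where q: "q \<in> ?P" using consistent by blast
  define x where "x = q + (b 0 - a 0 \<bullet> q + 1) *\<^sub>R a 0"
  have "a 0 \<bullet> a 0 = 1" using unit_rows \<open>0 < m\<close> by (simp add: power2_norm_eq_inner[symmetric])
  then have "a 0 \<bullet> x = b 0 + 1" by (simp add: x_def inner_add_right)
  then have "x \<notin> ?P" using \<open>0 < m\<close> by (auto simp: polyh_def)
  then have dist_pos: "dist_P ?P x > 0"
    using closest_point_in_polyh[OF consistent, of x] by (auto simp: dist_P_def)
  have "(dist_P ?P x)\<^sup>2 \<le> L\<^sup>2 * (\<Sum>i<m. (pos (a i \<bullet> x - b i))\<^sup>2)" using hoffman by blast
  also have "\<dots> \<le> L\<^sup>2 * (\<Sum>i<m. (dist_P ?P x)\<^sup>2)"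
    using pos_residual_le_dist_P[OF _ _ consistent] unit_rows
    by (intro mult_left_mono sum_mono power_mono) (auto simp: pos_def)
  finally show ?thesis using dist_pos by (simp add: algebra_simps)
qed

lemma power2_norm_convex_combination:
  fixes u w :: "'a::real_inner"
  shows "(norm (c *\<^sub>R u + (1 - c) *\<^sub>R w))\<^sup>2
           = c * (norm u)\<^sup>2 + (1 - c) * (norm w)\<^sup>2 - c * (1 - c) * (norm (u - w))\<^sup>2"
  by (simp add: power2_norm_eq_inner inner_add_left inner_add_right inner_diff_left
      inner_diff_right inner_commute algebra_simps)

lemma power2_norm_diff_scaleR_unit:
  fixes u w :: "'a::real_inner"
  assumes "norm w = 1"
  shows "(norm (u - t *\<^sub>R w))\<^sup>2 = (norm u)\<^sup>2 - 2 * t * (w \<bullet> u) + t\<^sup>2"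
proof -
  have "w \<bullet> w = 1" using assms by (simp add: power2_norm_eq_inner[symmetric])
  then show ?thesis
    by (simp add: power2_norm_eq_inner inner_diff_left inner_diff_right inner_commute
        algebra_simps) (simp add: power2_eq_square)
qed

lemma dist_P_sq_shift_le:
  fixes y w :: "'a::euclidean_space"
  assumes "norm w = 1" "polyh m a b \<noteq> {}"
  defines "p \<equiv> closest_point (polyh m a b) y"
  shows "(dist_P (polyh m a b) (y - t *\<^sub>R w))\<^sup>2
           \<le> (dist_P (polyh m a b) y)\<^sup>2 - 2 * t * (w \<bullet> (y - p)) + t\<^sup>2"
proof -
  have "dist_P (polyh m a b) (y - t *\<^sub>R w) \<le> norm ((y - t *\<^sub>R w) - p)"
    unfolding p_def by (intro dist_P_polyh_le closest_point_in_polyh assms(2))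
  also have "(y - t *\<^sub>R w) - p = (y - p) - t *\<^sub>R w"
    by (simp add: algebra_simps)
  finally have "dist_P (polyh m a b) (y - t *\<^sub>R w) \<le> norm ((y - p) - t *\<^sub>R w)" .
  then have "(dist_P (polyh m a b) (y - t *\<^sub>R w))\<^sup>2 \<le> (norm ((y - p) - t *\<^sub>R w))\<^sup>2"
    by (simp add: dist_P_nonneg power_mono)
  then show ?thesis
    by (simp add: power2_norm_diff_scaleR_unit[OF assms(1)] dist_P_def p_def)
qed

text \<open>The comparison point \<open>\<omega> proj(v) + (1 - \<omega>) proj(y)\<close> is feasible by convexity.\<close>
lemma dist_P_sq_convex_shift_le:
  fixes v y w :: "'a::euclidean_space"
  assumes "norm w = 1" "polyh m a b \<noteq> {}" "0 \<le> \<omega>" "\<omega> \<le> 1"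
  defines "p \<equiv> closest_point (polyh m a b) y" and "p' \<equiv> closest_point (polyh m a b) v"
  shows "(dist_P (polyh m a b) (\<omega> *\<^sub>R v + (1 - \<omega>) *\<^sub>R y - t *\<^sub>R w))\<^sup>2
           \<le> \<omega> * (dist_P (polyh m a b) v)\<^sup>2 + (1 - \<omega>) * (dist_P (polyh m a b) y)\<^sup>2
             - 2 * t * (\<omega> * (w \<bullet> (v - p')) + (1 - \<omega>) * (w \<bullet> (y - p))) + t\<^sup>2"
proof -
  let ?u = "\<omega> *\<^sub>R (v - p') + (1 - \<omega>) *\<^sub>R (y - p)"
  have "\<omega> *\<^sub>R p' + (1 - \<omega>) *\<^sub>R p \<in> polyh m a b"
    using convex_polyh closest_point_in_polyh[OF assms(2)] assms(3,4)
    by (auto simp: p_def p'_def intro!: convexD)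
  then have "dist_P (polyh m a b) (\<omega> *\<^sub>R v + (1 - \<omega>) *\<^sub>R y - t *\<^sub>R w)
      \<le> norm ((\<omega> *\<^sub>R v + (1 - \<omega>) *\<^sub>R y - t *\<^sub>R w) - (\<omega> *\<^sub>R p' + (1 - \<omega>) *\<^sub>R p))"
    by (rule dist_P_polyh_le)
  also have "(\<omega> *\<^sub>R v + (1 - \<omega>) *\<^sub>R y - t *\<^sub>R w) - (\<omega> *\<^sub>R p' + (1 - \<omega>) *\<^sub>R p) = ?u - t *\<^sub>R w"
    by (simp add: algebra_simps)
  finally have "dist_P (polyh m a b) (\<omega> *\<^sub>R v + (1 - \<omega>) *\<^sub>R y - t *\<^sub>R w) \<le> norm (?u - t *\<^sub>R w)" .
  then have "(dist_P (polyh m a b) (\<omega> *\<^sub>R v + (1 - \<omega>) *\<^sub>R y - t *\<^sub>R w))\<^sup>2 \<le> (norm (?u - t *\<^sub>R w))\<^sup>2"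
    by (simp add: dist_P_nonneg power_mono)
  also have "\<dots> = (norm ?u)\<^sup>2 - 2 * t * (\<omega> * (w \<bullet> (v - p')) + (1 - \<omega>) * (w \<bullet> (y - p))) + t\<^sup>2"
    by (simp add: power2_norm_diff_scaleR_unit[OF assms(1)] inner_add_right)
  also have "(norm ?u)\<^sup>2 \<le> \<omega> * (dist_P (polyh m a b) v)\<^sup>2 + (1 - \<omega>) * (dist_P (polyh m a b) y)\<^sup>2"
    unfolding power2_norm_convex_combination using assms(3,4)
    by (simp add: dist_P_def p_def p'_def)
  finally show ?thesis by simp
qed

subsection \<open>One deterministic step\<close>

definition lyapunov :: "'a::euclidean_space set \<Rightarrow> real \<Rightarrow> 'a \<times> 'a \<Rightarrow> real" where
  "lyapunov P c = (\<lambda>(x, v). (dist_P P v)\<^sup>2 + c * (dist_P P x)\<^sup>2)"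

text \<open>Here \<open>sy\<close>, \<open>sv\<close> stand for \<open>a\<^sub>i \<bullet> (y - proj y)\<close>, \<open>a\<^sub>i \<bullet> (v - proj v)\<close> and \<open>Dx = d(x,P)\<close>.
  The cross term \<open>r Dx\<close> is absorbed by \<open>2 r Dx \<le> r\<^sup>2 + Dx\<^sup>2\<close>, and \<open>\<eta> = 2\<delta> - \<delta>\<^sup>2\<close> turns
  \<open>c \<delta>\<^sup>2 r\<^sup>2\<close> into \<open>2 c \<delta> r\<^sup>2 - \<gamma>\<^sup>2 r\<^sup>2\<close>.\<close>
lemma lyapunov_step_arith:
  fixes r sy sv Dx Dy Dv X1 V1 \<omega> \<gamma> \<delta> \<eta> \<alpha> c :: real
  assumes r_nonneg: "0 \<le> r" and rsy: "r\<^sup>2 \<le> r * sy"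
    and rsv: "r * r / \<alpha> - r * (\<gamma> / \<eta>) * Dx \<le> r * sv"
    and X1: "X1 \<le> Dy\<^sup>2 - 2 * (\<delta> * r) * sy + (\<delta> * r)\<^sup>2"
    and V1: "V1 \<le> \<omega> * Dv\<^sup>2 + (1 - \<omega>) * Dy\<^sup>2 - 2 * (\<gamma> * r) * (\<omega> * sv + (1 - \<omega>) * sy) + (\<gamma> * r)\<^sup>2"
    and \<omega>: "0 \<le> \<omega>" "\<omega> \<le> 1" and "0 \<le> \<gamma>" "0 \<le> \<delta>" "0 < \<eta>" "0 \<le> c"
    and \<alpha>: "1 / \<alpha> = 1 + \<gamma> / \<eta>" and \<gamma>: "\<gamma>\<^sup>2 = c * \<eta>" and \<eta>: "\<eta> = 2 * \<delta> - \<delta>\<^sup>2"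
  shows "V1 + c * X1 \<le> \<omega> * Dv\<^sup>2 + \<omega> * c * Dx\<^sup>2 + (1 - \<omega> + c) * Dy\<^sup>2 - (2 * \<gamma> + \<omega> * c) * r\<^sup>2"
proof -
  have "\<gamma> * \<omega> * (r * r / \<alpha> - r * (\<gamma> / \<eta>) * Dx) \<le> \<gamma> * \<omega> * (r * sv)"
    using rsv \<omega> \<open>0 \<le> \<gamma>\<close> by (intro mult_left_mono) auto
  also have "r * r / \<alpha> = r * r * (1 + \<gamma> / \<eta>)"
    using \<alpha> by (metis times_divide_eq_right mult_1_right)
  also have "\<gamma> * \<omega> * (r * r * (1 + \<gamma> / \<eta>) - r * (\<gamma> / \<eta>) * Dx)
      = \<gamma> * \<omega> * r\<^sup>2 + \<omega> * (\<gamma>\<^sup>2 / \<eta>) * r\<^sup>2 - \<omega> * (\<gamma>\<^sup>2 / \<eta>) * (r * Dx)"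
    by (simp add: algebra_simps power2_eq_square)
  also have "\<gamma>\<^sup>2 / \<eta> = c" using \<gamma> \<open>0 < \<eta>\<close> by simp
  finally have sv_term: "\<gamma> * \<omega> * r\<^sup>2 + \<omega> * c * r\<^sup>2 - \<omega> * c * (r * Dx) \<le> \<gamma> * \<omega> * (r * sv)" .
  have "2 * (r * Dx) \<le> r\<^sup>2 + Dx\<^sup>2"
    using sum_squares_bound[of r Dx] by (simp add: power2_eq_square algebra_simps)
  then have cross_term: "\<omega> * c * (2 * (r * Dx)) \<le> \<omega> * c * (r\<^sup>2 + Dx\<^sup>2)"
    using \<omega> \<open>0 \<le> c\<close> by (intro mult_left_mono) auto
  have sy_term1: "\<gamma> * (1 - \<omega>) * r\<^sup>2 \<le> \<gamma> * (1 - \<omega>) * (r * sy)"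
    using rsy \<omega> \<open>0 \<le> \<gamma>\<close> by (intro mult_left_mono) auto
  have sy_term2: "c * \<delta> * r\<^sup>2 \<le> c * \<delta> * (r * sy)"
    using rsy \<open>0 \<le> c\<close> \<open>0 \<le> \<delta>\<close> by (intro mult_left_mono) auto
  have "c * X1 \<le> c * (Dy\<^sup>2 - 2 * (\<delta> * r) * sy + (\<delta> * r)\<^sup>2)"
    using X1 \<open>0 \<le> c\<close> by (intro mult_left_mono) auto
  moreover have "c * (\<delta> * r)\<^sup>2 = c * (2 * \<delta>) * r\<^sup>2 - \<gamma>\<^sup>2 * r\<^sup>2"
    unfolding \<gamma> \<eta> by (simp add: algebra_simps power2_eq_square)
  ultimately show ?thesis
    using V1 sv_term cross_term sy_term1 sy_term2 by (simp add: algebra_simps power_mult_distrib)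
qed

lemma lyapunov_step_le:
  fixes a :: "nat \<Rightarrow> 'a::euclidean_space" and x v y :: 'a
  assumes unit: "norm (a i) = 1" and "i < m" and consistent: "polyh m a b \<noteq> {}"
    and \<omega>: "0 \<le> \<omega>" "\<omega> \<le> 1" and "0 \<le> \<gamma>" "0 \<le> \<delta>" "0 < \<eta>" "0 < \<alpha>" "0 \<le> c"
    and \<alpha>: "1 / \<alpha> = 1 + \<gamma> / \<eta>" and \<gamma>: "\<gamma>\<^sup>2 = c * \<eta>" and \<eta>: "\<eta> = 2 * \<delta> - \<delta>\<^sup>2"
  defines "y \<equiv> \<alpha> *\<^sub>R v + (1 - \<alpha>) *\<^sub>R x" and "r \<equiv> pos (a i \<bullet> y - b i)"
  shows "lyapunov (polyh m a b) c (y - (\<delta> * r) *\<^sub>R a i, \<omega> *\<^sub>R v + (1 - \<omega>) *\<^sub>R y - (\<gamma> * r) *\<^sub>R a i)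
    \<le> \<omega> * lyapunov (polyh m a b) c (x, v) + (1 - \<omega> + c) * (dist_P (polyh m a b) y)\<^sup>2
       - (2 * \<gamma> + \<omega> * c) * r\<^sup>2"
proof -
  let ?P = "polyh m a b"
  define sy where "sy = a i \<bullet> (y - closest_point ?P y)"
  define sv where "sv = a i \<bullet> (v - closest_point ?P v)"
  have r_nonneg: "0 \<le> r" by (simp add: r_def pos_def)
  have residual_le: "a i \<bullet> z - b i \<le> a i \<bullet> (z - closest_point ?P z)" for z
    using residual_le_inner_diff[OF \<open>i < m\<close> closest_point_in_polyh[OF consistent]] .
  have rsy: "r\<^sup>2 \<le> r * sy"
  proof (cases "a i \<bullet> y - b i \<le> 0")
    case False
    then have "r = a i \<bullet> y - b i" by (simp add: r_def pos_def)
    then show ?thesis using residual_le[of y] r_nonneg by (simp add: sy_def power2_eq_square mult_left_mono)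
  qed (simp add: r_def pos_def)
  have rsv: "r * r / \<alpha> - r * (\<gamma> / \<eta>) * dist_P ?P x \<le> r * sv"
  proof (cases "a i \<bullet> y - b i \<le> 0")
    case False
    then have r: "r = a i \<bullet> y - b i" by (simp add: r_def pos_def)
    have ratio: "\<gamma> / \<eta> = (1 - \<alpha>) / \<alpha>" using \<alpha> \<open>0 < \<alpha>\<close> by (simp add: field_simps)
    have ay: "a i \<bullet> y = \<alpha> * (a i \<bullet> v) + (1 - \<alpha>) * (a i \<bullet> x)" by (simp add: y_def inner_add_right)
    have "a i \<bullet> v - b i = r / \<alpha> - (\<gamma> / \<eta>) * (a i \<bullet> x - b i)"
      unfolding ratio r ay using \<open>0 < \<alpha>\<close> by (simp add: field_simps)
    moreover have "(\<gamma> / \<eta>) * (a i \<bullet> x - b i) \<le> (\<gamma> / \<eta>) * dist_P ?P x"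
      using residual_le_dist_P[OF \<open>i < m\<close> unit consistent] \<open>0 \<le> \<gamma>\<close> \<open>0 < \<eta>\<close>
      by (intro mult_left_mono) auto
    ultimately have "r / \<alpha> - (\<gamma> / \<eta>) * dist_P ?P x \<le> sv"
      using residual_le[of v] by (simp add: sv_def)
    then have "r * (r / \<alpha> - (\<gamma> / \<eta>) * dist_P ?P x) \<le> r * sv"
      using r_nonneg by (rule mult_left_mono)
    then show ?thesis by (simp add: algebra_simps)
  qed (simp add: r_def pos_def)
  have X1: "(dist_P ?P (y - (\<delta> * r) *\<^sub>R a i))\<^sup>2
      \<le> (dist_P ?P y)\<^sup>2 - 2 * (\<delta> * r) * sy + (\<delta> * r)\<^sup>2"
    unfolding sy_def by (rule dist_P_sq_shift_le[OF unit consistent])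
  have V1: "(dist_P ?P (\<omega> *\<^sub>R v + (1 - \<omega>) *\<^sub>R y - (\<gamma> * r) *\<^sub>R a i))\<^sup>2
      \<le> \<omega> * (dist_P ?P v)\<^sup>2 + (1 - \<omega>) * (dist_P ?P y)\<^sup>2
        - 2 * (\<gamma> * r) * (\<omega> * sv + (1 - \<omega>) * sy) + (\<gamma> * r)\<^sup>2"
    unfolding sy_def sv_def by (rule dist_P_sq_convex_shift_le[OF unit consistent \<omega>])
  show ?thesis
    using lyapunov_step_arith[OF r_nonneg rsy rsv X1 V1 \<omega> \<open>0 \<le> \<gamma>\<close> \<open>0 \<le> \<delta>\<close> \<open>0 < \<eta>\<close> \<open>0 \<le> c\<close> \<alpha> \<gamma> \<eta>]
    by (simp add: lyapunov_def algebra_simps)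
qed

subsection \<open>Uniform sampling of \<open>\<beta>\<close>-subsets\<close>

lemma finite_samples: "finite (samples m \<beta>)"
  by (rule finite_subset[of _ "Pow {..<m}"]) (auto simp: samples_def)

lemma card_samples: "card (samples m \<beta>) = m choose \<beta>"
  using n_subsets[of "{..<m}" \<beta>] by (simp add: samples_def)

lemma samples_nonempty: "\<beta> \<le> m \<Longrightarrow> samples m \<beta> \<noteq> {}"
  using card_samples[of m \<beta>] by (auto simp: card_eq_0_iff)

lemma card_samples_containing:
  assumes "j < m" "1 \<le> \<beta>"
  shows "card {\<tau>\<in>samples m \<beta>. j \<in> \<tau>} = (m - 1) choose (\<beta> - 1)"
proof -
  let ?T = "{\<sigma>. \<sigma> \<subseteq> {..<m} - {j} \<and> card \<sigma> = \<beta> - 1}"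
  have "{\<tau>\<in>samples m \<beta>. j \<in> \<tau>} = insert j ` ?T"
  proof (intro set_eqI iffI)
    fix \<tau> assume \<tau>: "\<tau> \<in> {\<tau>\<in>samples m \<beta>. j \<in> \<tau>}"
    then have "finite \<tau>" by (auto simp: samples_def intro: finite_subset)
    then have "\<tau> - {j} \<in> ?T" using \<tau> by (auto simp: samples_def)
    moreover have "\<tau> = insert j (\<tau> - {j})" using \<tau> by auto
    ultimately show "\<tau> \<in> insert j ` ?T" by blast
  next
    fix \<tau> assume "\<tau> \<in> insert j ` ?T"
    then obtain \<sigma> where \<sigma>: "\<sigma> \<in> ?T" "\<tau> = insert j \<sigma>" by blast
    then have "finite \<sigma>" "j \<notin> \<sigma>" by (auto intro: finite_subset)
    then have "card \<tau> = \<beta>" using \<sigma> assms(2) by simp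
    then show "\<tau> \<in> {\<tau>\<in>samples m \<beta>. j \<in> \<tau>}" using \<sigma> assms(1) by (auto simp: samples_def)
  qed
  moreover have "inj_on (insert j) ?T" by (rule inj_onI) auto
  ultimately have "card {\<tau>\<in>samples m \<beta>. j \<in> \<tau>} = card ?T" by (simp add: card_image)
  also have "\<dots> = card ({..<m} - {j}) choose (\<beta> - 1)" by (rule n_subsets) auto
  finally show ?thesis using assms(1) by simp
qed

lemma sum_samples_sum:
  fixes g :: "nat \<Rightarrow> real"
  assumes "1 \<le> \<beta>"
  shows "(\<Sum>\<tau>\<in>samples m \<beta>. \<Sum>j\<in>\<tau>. g j) = real ((m - 1) choose (\<beta> - 1)) * (\<Sum>j<m. g j)"
proof -
  have "(\<Sum>\<tau>\<in>samples m \<beta>. \<Sum>j\<in>\<tau>. g j) = (\<Sum>\<tau>\<in>samples m \<beta>. \<Sum>j\<in>{j\<in>{..<m}. j \<in> \<tau>}. g j)"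
    by (intro sum.cong refl arg_cong[where f = "\<lambda>A. sum g A"]) (auto simp: samples_def)
  also have "\<dots> = (\<Sum>j<m. \<Sum>\<tau>\<in>{\<tau>\<in>samples m \<beta>. j \<in> \<tau>}. g j)"
    by (rule sum.swap_restrict) (simp_all add: finite_samples)
  also have "\<dots> = (\<Sum>j<m. real ((m - 1) choose (\<beta> - 1)) * g j)"
    using card_samples_containing assms by simp
  finally show ?thesis by (simp add: sum_distrib_left)
qed

text \<open>Each row lies in a fraction \<open>\<beta>/m\<close> of the samples, and a sample's maximum dominates the
  average over its \<open>\<beta>\<close> rows.\<close>
lemma mean_le_mean_sample_max:
  fixes g :: "nat \<Rightarrow> real" and s :: "nat set \<Rightarrow> nat"
  assumes "1 \<le> \<beta>" "\<beta> \<le> m"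
    and max: "\<And>\<tau> j. \<tau> \<in> samples m \<beta> \<Longrightarrow> j \<in> \<tau> \<Longrightarrow> g j \<le> g (s \<tau>)"
  shows "(\<Sum>i<m. g i) / real m \<le> (\<Sum>\<tau>\<in>samples m \<beta>. g (s \<tau>)) / real (card (samples m \<beta>))"
proof -
  have binomial: "real m * real ((m - 1) choose (\<beta> - 1)) = real (m choose \<beta>) * real \<beta>"
    using Suc_times_binomial_eq[of "m - 1" "\<beta> - 1"] assms(1,2) by (simp flip: of_nat_mult)
  have "real ((m - 1) choose (\<beta> - 1)) * (\<Sum>j<m. g j) = (\<Sum>\<tau>\<in>samples m \<beta>. \<Sum>j\<in>\<tau>. g j)"
    using sum_samples_sum assms(1) by simp
  also have "\<dots> \<le> (\<Sum>\<tau>\<in>samples m \<beta>. real \<beta> * g (s \<tau>))"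
  proof (rule sum_mono)
    fix \<tau> assume "\<tau> \<in> samples m \<beta>"
    then have "(\<Sum>j\<in>\<tau>. g j) \<le> of_nat (card \<tau>) * g (s \<tau>)" and "card \<tau> = \<beta>"
      using max by (auto intro: sum_bounded_above simp: samples_def)
    then show "(\<Sum>j\<in>\<tau>. g j) \<le> real \<beta> * g (s \<tau>)" by simp
  qed
  also have "\<dots> = real \<beta> * (\<Sum>\<tau>\<in>samples m \<beta>. g (s \<tau>))"
    by (simp add: sum_distrib_left)
  finally have "real m * real ((m - 1) choose (\<beta> - 1)) * (\<Sum>j<m. g j)
      \<le> real m * (real \<beta> * (\<Sum>\<tau>\<in>samples m \<beta>. g (s \<tau>)))"
    unfolding mult.assoc by (rule mult_left_mono) simp
  then have "real \<beta> * (real (m choose \<beta>) * (\<Sum>j<m. g j))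
      \<le> real \<beta> * (real m * (\<Sum>\<tau>\<in>samples m \<beta>. g (s \<tau>)))"
    unfolding binomial by (simp add: algebra_simps)
  then have "real (m choose \<beta>) * (\<Sum>j<m. g j) \<le> real m * (\<Sum>\<tau>\<in>samples m \<beta>. g (s \<tau>))"
    using assms(1) by simp
  then show ?thesis
    using assms(1,2) by (simp add: card_samples field_simps)
qed

subsection \<open>Expectation over the sample sequence\<close>

lemma expectation_pair_pmf_finite:
  fixes H :: "'a \<times> 'b \<Rightarrow> real"
  assumes finA: "finite (set_pmf A)" and finB: "finite (set_pmf B)"
  shows "measure_pmf.expectation (pair_pmf A B) H
       = measure_pmf.expectation B (\<lambda>b. measure_pmf.expectation A (\<lambda>a. H (a, b)))"
proof -
  have expA: "measure_pmf.expectation A (\<lambda>a. H (a, b)) = (\<Sum>a\<in>set_pmf A. H (a, b) * pmf A a)" for b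
    by (rule integral_measure_pmf_real) (use finA in auto)
  have "measure_pmf.expectation (pair_pmf A B) H
      = (\<Sum>z\<in>set_pmf A \<times> set_pmf B. H z * pmf (pair_pmf A B) z)"
    by (rule integral_measure_pmf_real) (use finA finB in auto)
  also have "\<dots> = (\<Sum>a\<in>set_pmf A. \<Sum>b\<in>set_pmf B. H (a, b) * (pmf A a * pmf B b))"
    by (simp add: sum.cartesian_product) (rule sum.cong, auto simp: pmf_pair)
  also have "\<dots> = (\<Sum>b\<in>set_pmf B. measure_pmf.expectation A (\<lambda>a. H (a, b)) * pmf B b)"
    by (subst sum.swap) (simp add: expA sum_distrib_right mult.assoc mult.left_commute)
  also have "\<dots> = measure_pmf.expectation B (\<lambda>b. measure_pmf.expectation A (\<lambda>a. H (a, b)))"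
    by (rule integral_measure_pmf_real[symmetric]) (use finB in auto)
  finally show ?thesis .
qed

lemma finite_set_pmf_sample_seq: "\<beta> \<le> m \<Longrightarrow> finite (set_pmf (sample_seq m \<beta> k))"
  unfolding sample_seq_def
  using samples_nonempty finite_samples
  by (intro finite_subset[OF set_Pi_pmf_subset' finite_PiE_dflt]) auto

lemma paskm_fun_upd:
  "j \<le> k \<Longrightarrow> paskm a b sel \<delta> \<alpha> \<omega> \<gamma> x0 (ts(k := t)) j = paskm a b sel \<delta> \<alpha> \<omega> \<gamma> x0 ts j"
  by (induction j) auto

lemma paskm_E_Suc:
  assumes "\<beta> \<le> m"
  shows "paskm_E m \<beta> a b sel \<delta> \<alpha> \<omega> \<gamma> x0 (Suc k) F
    = measure_pmf.expectation (sample_seq m \<beta> k) (\<lambda>ts.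
        measure_pmf.expectation (pmf_of_set (samples m \<beta>))
          (\<lambda>t. F (paskm_step a b sel \<delta> \<alpha> \<omega> \<gamma> t (paskm a b sel \<delta> \<alpha> \<omega> \<gamma> x0 ts k))))"
proof -
  let ?U = "pmf_of_set (samples m \<beta>)"
  have "sample_seq m \<beta> (Suc k) = Pi_pmf (insert k {..<k}) {} (\<lambda>_. ?U)"
    by (simp add: sample_seq_def lessThan_Suc)
  also have "\<dots> = map_pmf (\<lambda>(t, ts). ts(k := t)) (pair_pmf ?U (sample_seq m \<beta> k))"
    by (subst Pi_pmf_insert) (auto simp: sample_seq_def)
  finally have seq: "sample_seq m \<beta> (Suc k) = map_pmf (\<lambda>(t, ts). ts(k := t)) (pair_pmf ?U (sample_seq m \<beta> k))" .
  have "paskm_E m \<beta> a b sel \<delta> \<alpha> \<omega> \<gamma> x0 (Suc k) F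
      = measure_pmf.expectation (pair_pmf ?U (sample_seq m \<beta> k))
          (\<lambda>(t, ts). F (paskm_step a b sel \<delta> \<alpha> \<omega> \<gamma> t (paskm a b sel \<delta> \<alpha> \<omega> \<gamma> x0 ts k)))"
    unfolding paskm_E_def seq integral_map_pmf
    by (intro Bochner_Integration.integral_cong) (auto simp: paskm_fun_upd)
  also have "\<dots> = measure_pmf.expectation (sample_seq m \<beta> k) (\<lambda>ts. measure_pmf.expectation ?U
          (\<lambda>t. F (paskm_step a b sel \<delta> \<alpha> \<omega> \<gamma> t (paskm a b sel \<delta> \<alpha> \<omega> \<gamma> x0 ts k))))"
    using assms finite_samples samples_nonempty
    by (subst expectation_pair_pmf_finite) (auto intro: finite_set_pmf_sample_seq)
  finally show ?thesis .
qed

lemma paskm_E_0: "paskm_E m \<beta> a b sel \<delta> \<alpha> \<omega> \<gamma> x0 0 F = F (x0, x0)"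
proof -
  have "paskm_E m \<beta> a b sel \<delta> \<alpha> \<omega> \<gamma> x0 0 F
     = (\<Sum>ts\<in>{\<lambda>_. {}}. F (paskm a b sel \<delta> \<alpha> \<omega> \<gamma> x0 ts 0) * pmf (sample_seq m \<beta> 0) ts)"
    unfolding paskm_E_def by (rule integral_measure_pmf_real) (auto simp: sample_seq_def)
  then show ?thesis by (simp add: sample_seq_def)
qed

subsection \<open>The parameter choice\<close>

locale paskm_params =
  fixes \<mu>1 \<delta> \<eta> \<zeta> \<gamma> \<alpha> \<omega> :: real
  assumes mu1_pos: "0 < \<mu>1" and mu1_le_1: "\<mu>1 \<le> 1"
    and delta: "0 < \<delta>" "\<delta> < 2"
    and eta: "\<eta> = 2 * \<delta> - \<delta>\<^sup>2"
    and zeta: "\<zeta> > 0" "\<mu>1 < 1 \<longrightarrow> \<zeta> < 4 * \<eta> * \<mu>1 / (1 - \<mu>1)\<^sup>2"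
    and gamma: "\<gamma> = sqrt (\<zeta> * \<eta> * \<mu>1)"
    and alpha: "\<alpha> = \<eta> / (\<eta> + \<gamma>)"
    and omega: "\<omega> = 1 - (\<zeta> * \<mu>1\<^sup>2 + 2 * \<gamma> * \<mu>1 - \<zeta> * \<mu>1) / (1 + \<zeta> * \<mu>1\<^sup>2)"
begin

lemma eta_pos: "0 < \<eta>"
proof -
  have "\<eta> = \<delta> * (2 - \<delta>)" by (simp add: eta power2_eq_square algebra_simps)
  then show ?thesis using delta by simp
qed

lemma eta_le_1: "\<eta> \<le> 1"
proof -
  have "1 - \<eta> = (1 - \<delta>)\<^sup>2" by (simp add: eta power2_eq_square algebra_simps)
  then show ?thesis by (metis diff_ge_0_iff_ge zero_le_power2)
qed

lemma gamma_pos: "0 < \<gamma>"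
  using gamma zeta mu1_pos eta_pos by simp

lemma gamma_sq: "\<gamma>\<^sup>2 = \<zeta> * \<mu>1 * \<eta>"
  using gamma zeta mu1_pos eta_pos by simp

lemma alpha_pos: "0 < \<alpha>"
  using alpha eta_pos gamma_pos by simp

lemma inverse_alpha: "1 / \<alpha> = 1 + \<gamma> / \<eta>"
  using alpha eta_pos by (simp add: add_divide_distrib)

lemma omega_eq: "\<omega> * (1 + \<zeta> * \<mu>1\<^sup>2) = 1 + \<zeta> * \<mu>1 - 2 * \<gamma> * \<mu>1"
proof -
  have "0 < 1 + \<zeta> * \<mu>1\<^sup>2" using zeta by (simp add: add_pos_nonneg)
  then show ?thesis using omega by (simp add: field_simps)
qed

lemma rate_identity: "\<mu>1 * (2 * \<gamma> + \<omega> * (\<zeta> * \<mu>1)) = 1 - \<omega> + \<zeta> * \<mu>1"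
  using omega_eq by (simp add: algebra_simps power2_eq_square)

text \<open>With \<open>s = sqrt (\<zeta> \<mu>1)\<close>: \<open>\<gamma> \<mu>1 = s sqrt \<eta> \<mu>1 \<le> s\<close>, so \<open>1 + \<zeta> \<mu>1 - 2 \<gamma> \<mu>1 \<ge> (1 - s)\<^sup>2\<close>.\<close>
lemma omega_nonneg: "0 \<le> \<omega>"
proof -
  define s where "s = sqrt (\<zeta> * \<mu>1)"
  have "0 \<le> s" and s_sq: "s\<^sup>2 = \<zeta> * \<mu>1" using zeta mu1_pos by (auto simp: s_def)
  have "sqrt \<eta> * \<mu>1 \<le> 1" using eta_le_1 mu1_le_1 mu1_pos by (intro mult_le_one) auto
  then have "s * (sqrt \<eta> * \<mu>1) \<le> s" using \<open>0 \<le> s\<close> by (simp add: mult_left_le)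
  moreover have "\<gamma> = s * sqrt \<eta>" by (simp add: gamma s_def real_sqrt_mult ac_simps)
  ultimately have "0 \<le> 1 + \<zeta> * \<mu>1 - 2 * \<gamma> * \<mu>1"
    using s_sq zero_le_power2[of "1 - s"] by (simp add: power2_diff algebra_simps)
  then have "0 \<le> \<omega> * (1 + \<zeta> * \<mu>1\<^sup>2)" using omega_eq by simp
  moreover have "0 < 1 + \<zeta> * \<mu>1\<^sup>2" using zeta by (simp add: add_pos_nonneg)
  ultimately show ?thesis by (simp add: zero_le_mult_iff)
qed

text \<open>This is where the upper bound on \<open>\<zeta>\<close> enters: it is equivalent to \<open>\<zeta> (1 - \<mu>1) < 2 \<gamma>\<close>.\<close>
lemma omega_less_1: "\<omega> < 1"
proof -
  have "\<zeta> * (1 - \<mu>1) < 2 * \<gamma>"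
  proof (cases "\<mu>1 < 1")
    case True
    then have "\<zeta> * (1 - \<mu>1)\<^sup>2 < 4 * \<eta> * \<mu>1" using zeta by (simp add: pos_less_divide_eq)
    then have "\<zeta> * (\<zeta> * (1 - \<mu>1)\<^sup>2) < \<zeta> * (4 * \<eta> * \<mu>1)" using zeta(1) by simp
    moreover have "(2 * \<gamma>)\<^sup>2 = \<zeta> * (4 * \<eta> * \<mu>1)"
      using gamma_sq by (simp add: power_mult_distrib algebra_simps)
    moreover have "(\<zeta> * (1 - \<mu>1))\<^sup>2 = \<zeta> * (\<zeta> * (1 - \<mu>1)\<^sup>2)"
      by (simp add: power_mult_distrib power2_eq_square)
    ultimately have "(\<zeta> * (1 - \<mu>1))\<^sup>2 < (2 * \<gamma>)\<^sup>2" by simp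
    then show ?thesis by (rule power_less_imp_less_base) (use gamma_pos in simp)
  next
    case False
    then show ?thesis using mu1_le_1 gamma_pos by simp
  qed
  then have "0 < \<zeta> * \<mu>1\<^sup>2 - \<zeta> * \<mu>1 + 2 * \<gamma> * \<mu>1"
    using mult_strict_left_mono[of "\<zeta> * (1 - \<mu>1)" "2 * \<gamma>" \<mu>1] mu1_pos
    by (simp add: algebra_simps power2_eq_square)
  then have "\<omega> * (1 + \<zeta> * \<mu>1\<^sup>2) < 1 * (1 + \<zeta> * \<mu>1\<^sup>2)" using omega_eq by simp
  then show ?thesis by (rule mult_right_less_imp_less) (use zeta in \<open>simp add: add_pos_nonneg\<close>)
qed

end

subsection \<open>Linear convergence in expectation\<close>

locale paskm_setting =
  fixes m \<beta> :: nat and a :: "nat \<Rightarrow> 'a::euclidean_space" and b :: "nat \<Rightarrow> real"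
    and L \<mu>1 \<delta> \<eta> \<zeta> \<gamma> \<alpha> \<omega> :: real and x0 :: 'a
    and sel :: "'a \<Rightarrow> nat set \<Rightarrow> nat"
  assumes unit_rows: "\<forall>i<m. norm (a i) = 1"
    and consistent: "polyh m a b \<noteq> {}"
    and beta: "1 \<le> \<beta>" "\<beta> \<le> m"
    and L_pos: "L > 0"
    and hoffman: "\<forall>x. (dist_P (polyh m a b) x)\<^sup>2 \<le> L\<^sup>2 * (\<Sum>i<m. (pos (a i \<bullet> x - b i))\<^sup>2)"
    and mu1: "\<mu>1 = 1 / (real m * L\<^sup>2)"
    and sel_mem: "\<forall>y. \<forall>\<tau>\<in>samples m \<beta>. sel y \<tau> \<in> \<tau>"
    and sel_max: "\<forall>y. \<forall>\<tau>\<in>samples m \<beta>. \<forall>j\<in>\<tau>.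
                    pos (a j \<bullet> y - b j) \<le> pos (a (sel y \<tau>) \<bullet> y - b (sel y \<tau>))"
    and delta: "0 < \<delta>" "\<delta> < 2"
    and eta: "\<eta> = 2 * \<delta> - \<delta>\<^sup>2"
    and zeta: "\<zeta> > 0" "\<mu>1 < 1 \<longrightarrow> \<zeta> < 4 * \<eta> * \<mu>1 / (1 - \<mu>1)\<^sup>2"
    and gamma: "\<gamma> = sqrt (\<zeta> * \<eta> * \<mu>1)"
    and alpha: "\<alpha> = \<eta> / (\<eta> + \<gamma>)"
    and omega: "\<omega> = 1 - (\<zeta> * \<mu>1\<^sup>2 + 2 * \<gamma> * \<mu>1 - \<zeta> * \<mu>1) / (1 + \<zeta> * \<mu>1\<^sup>2)"
begin

abbreviation "P \<equiv> polyh m a b"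
abbreviation "\<Phi> \<equiv> lyapunov P (\<zeta> * \<mu>1)"
abbreviation "E \<equiv> paskm_E m \<beta> a b sel \<delta> \<alpha> \<omega> \<gamma> x0"

sublocale paskm_params \<mu>1 \<delta> \<eta> \<zeta> \<gamma> \<alpha> \<omega>
proof unfold_locales
  have "0 < m" using beta by simp
  then show "0 < \<mu>1" using mu1 L_pos by simp
  have "1 \<le> L\<^sup>2 * real m" using hoffman_constant_ge[OF unit_rows consistent \<open>0 < m\<close> hoffman] .
  then show "\<mu>1 \<le> 1" using mu1 by (simp add: mult.commute)
qed (fact delta eta zeta gamma alpha omega)+

lemma hoffman_mean_residual_le:
  "\<mu>1 * (dist_P P y)\<^sup>2
     \<le> (\<Sum>\<tau>\<in>samples m \<beta>. (pos (a (sel y \<tau>) \<bullet> y - b (sel y \<tau>)))\<^sup>2) / real (card (samples m \<beta>))"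
proof -
  have "\<mu>1 * (dist_P P y)\<^sup>2 \<le> (\<Sum>i<m. (pos (a i \<bullet> y - b i))\<^sup>2) / real m"
    using hoffman[rule_format, of y] L_pos beta unfolding mu1 by (simp add: field_simps)
  also have "\<dots> \<le> (\<Sum>\<tau>\<in>samples m \<beta>. (pos (a (sel y \<tau>) \<bullet> y - b (sel y \<tau>)))\<^sup>2) / real (card (samples m \<beta>))"
    using beta sel_max by (intro mean_le_mean_sample_max) (auto simp: pos_def intro!: power_mono)
  finally show ?thesis .
qed

lemma expected_lyapunov_step:
  "measure_pmf.expectation (pmf_of_set (samples m \<beta>))
     (\<lambda>\<tau>. \<Phi> (paskm_step a b sel \<delta> \<alpha> \<omega> \<gamma> \<tau> s)) \<le> \<omega> * \<Phi> s"
proof -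
  obtain x v where s: "s = (x, v)" by fastforce
  define y where "y = \<alpha> *\<^sub>R v + (1 - \<alpha>) *\<^sub>R x"
  define r where "r \<tau> = pos (a (sel y \<tau>) \<bullet> y - b (sel y \<tau>))" for \<tau>
  define K where "K = 2 * \<gamma> + \<omega> * (\<zeta> * \<mu>1)"
  let ?S = "samples m \<beta>"
  have S: "finite ?S" "?S \<noteq> {}" using finite_samples samples_nonempty beta by auto
  have K_nonneg: "0 \<le> K" using gamma_pos omega_nonneg zeta mu1_pos by (simp add: K_def)
  have step: "\<Phi> (paskm_step a b sel \<delta> \<alpha> \<omega> \<gamma> \<tau> s) \<le> \<omega> * \<Phi> s + K * (\<mu>1 * (dist_P P y)\<^sup>2 - (r \<tau>)\<^sup>2)"
    if "\<tau> \<in> ?S" for \<tau>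
  proof -
    have i: "sel y \<tau> < m" using sel_mem that by (auto simp: samples_def)
    have rate: "1 - \<omega> + \<zeta> * \<mu>1 = \<mu>1 * K" using rate_identity by (simp add: K_def)
    from lyapunov_step_le[OF unit_rows[rule_format, OF i] i consistent omega_nonneg
        less_imp_le[OF omega_less_1] less_imp_le[OF gamma_pos] less_imp_le[OF delta(1)] eta_pos
        alpha_pos _ inverse_alpha gamma_sq eta, where x = x and v = v, unfolded rate]
    show ?thesis
      using zeta(1) mu1_pos by (simp add: paskm_step_def Let_def s y_def r_def K_def algebra_simps)
  qed
  have "measure_pmf.expectation (pmf_of_set ?S) (\<lambda>\<tau>. \<Phi> (paskm_step a b sel \<delta> \<alpha> \<omega> \<gamma> \<tau> s))
      = (\<Sum>\<tau>\<in>?S. \<Phi> (paskm_step a b sel \<delta> \<alpha> \<omega> \<gamma> \<tau> s)) / real (card ?S)"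
    using S by (simp add: integral_pmf_of_set)
  also have "\<dots> \<le> (\<Sum>\<tau>\<in>?S. \<omega> * \<Phi> s + K * (\<mu>1 * (dist_P P y)\<^sup>2 - (r \<tau>)\<^sup>2)) / real (card ?S)"
    by (intro divide_right_mono sum_mono step) auto
  also have "\<dots> = \<omega> * \<Phi> s + K * (\<mu>1 * (dist_P P y)\<^sup>2 - (\<Sum>\<tau>\<in>?S. (r \<tau>)\<^sup>2) / real (card ?S))"
    using S by (simp add: sum.distrib sum_subtractf sum_distrib_left[symmetric] field_simps)
  also have "\<dots> \<le> \<omega> * \<Phi> s"
    using hoffman_mean_residual_le[of y] K_nonneg unfolding r_def
    by (simp add: mult_nonneg_nonpos)
  finally show ?thesis .
qed

lemma integrable_sample_seq:
  fixes f :: "(nat \<Rightarrow> nat set) \<Rightarrow> real"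
  shows "integrable (measure_pmf (sample_seq m \<beta> k)) f"
  by (rule integrable_measure_pmf_finite[OF finite_set_pmf_sample_seq[OF beta(2)]])

lemma paskm_E_lyapunov_le: "E k \<Phi> \<le> \<omega> ^ k * E 0 \<Phi>"
proof (induction k)
  case (Suc k)
  have "E (Suc k) \<Phi>
      = measure_pmf.expectation (sample_seq m \<beta> k) (\<lambda>ts.
          measure_pmf.expectation (pmf_of_set (samples m \<beta>))
            (\<lambda>t. \<Phi> (paskm_step a b sel \<delta> \<alpha> \<omega> \<gamma> t (paskm a b sel \<delta> \<alpha> \<omega> \<gamma> x0 ts k))))"
    using paskm_E_Suc beta by blast
  also have "\<dots> \<le> \<omega> * E k \<Phi>"
    unfolding paskm_E_def integral_mult_right_zero[symmetric]
    by (intro integral_mono integrable_sample_seq expected_lyapunov_step)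
  also have "\<dots> \<le> \<omega> * (\<omega> ^ k * E 0 \<Phi>)"
    using Suc omega_nonneg by (rule mult_left_mono)
  finally show ?case by simp
qed simp

lemma paskm_E_lyapunov_0: "E 0 \<Phi> = (1 + \<zeta> * \<mu>1) * (dist_P P x0)\<^sup>2"
  by (simp add: paskm_E_0 lyapunov_def algebra_simps)

lemma paskm_E_tendsto_0:
  assumes "\<And>s. 0 \<le> f s" and "\<And>s. f s \<le> C * \<Phi> s" and "0 \<le> C"
  shows "(\<lambda>k. E k f) \<longlonglongrightarrow> 0"
proof (rule tendsto_sandwich[OF _ _ tendsto_const])
  show "\<forall>\<^sub>F k in sequentially. 0 \<le> E k f"
    using assms(1) by (simp add: paskm_E_def)
  have "E k f \<le> C * (\<omega> ^ k * E 0 \<Phi>)" for k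
  proof -
    have "E k f \<le> C * E k \<Phi>"
      unfolding paskm_E_def integral_mult_right_zero[symmetric]
      by (intro integral_mono integrable_sample_seq assms(2))
    also have "\<dots> \<le> C * (\<omega> ^ k * E 0 \<Phi>)"
      using paskm_E_lyapunov_le \<open>0 \<le> C\<close> by (rule mult_left_mono)
    finally show ?thesis .
  qed
  then show "\<forall>\<^sub>F k in sequentially. E k f \<le> C * (\<omega> ^ k * E 0 \<Phi>)" by simp
  show "(\<lambda>k. C * (\<omega> ^ k * E 0 \<Phi>)) \<longlonglongrightarrow> 0"
    using omega_nonneg omega_less_1
    by (intro tendsto_mult_right_zero tendsto_mult_left_zero LIMSEQ_power_zero) simp
qed

end

theorem theorem8:
  fixes m \<beta> :: nat and a :: "nat \<Rightarrow> 'a::euclidean_space" and b :: "nat \<Rightarrow> real"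
    and L \<mu>1 \<delta> \<eta> \<zeta> \<gamma> \<alpha> \<omega> :: real and x0 :: 'a
    and sel :: "'a \<Rightarrow> nat set \<Rightarrow> nat"
  assumes unit_rows: "\<forall>i<m. norm (a i) = 1"
    and consistent: "polyh m a b \<noteq> {}"
    and beta: "1 \<le> \<beta>" "\<beta> \<le> m"
    and L_pos: "L > 0"
    and hoffman: "\<forall>x. (dist_P (polyh m a b) x)\<^sup>2 \<le> L\<^sup>2 * (\<Sum>i<m. (pos (a i \<bullet> x - b i))\<^sup>2)"
    and mu1: "\<mu>1 = 1 / (real m * L\<^sup>2)"
    and sel_mem: "\<forall>y. \<forall>\<tau>\<in>samples m \<beta>. sel y \<tau> \<in> \<tau>"
    and sel_max: "\<forall>y. \<forall>\<tau>\<in>samples m \<beta>. \<forall>j\<in>\<tau>.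
                    pos (a j \<bullet> y - b j) \<le> pos (a (sel y \<tau>) \<bullet> y - b (sel y \<tau>))"
    and delta: "0 < \<delta>" "\<delta> < 2"
    and eta: "\<eta> = 2 * \<delta> - \<delta>\<^sup>2"
    and zeta: "\<zeta> > 0" "\<mu>1 < 1 \<longrightarrow> \<zeta> < 4 * \<eta> * \<mu>1 / (1 - \<mu>1)\<^sup>2"
    and gamma: "\<gamma> = sqrt (\<zeta> * \<eta> * \<mu>1)"
    and alpha: "\<alpha> = \<eta> / (\<eta> + \<gamma>)"
    and omega: "\<omega> = 1 - (\<zeta> * \<mu>1\<^sup>2 + 2 * \<gamma> * \<mu>1 - \<zeta> * \<mu>1) / (1 + \<zeta> * \<mu>1\<^sup>2)"
  shows "(\<forall>k. paskm_E m \<beta> a b sel \<delta> \<alpha> \<omega> \<gamma> x0 (Suc k)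
               (\<lambda>(x, v). (dist_P (polyh m a b) v)\<^sup>2 + \<zeta> * \<mu>1 * (dist_P (polyh m a b) x)\<^sup>2)
           \<le> \<omega> ^ (Suc k) * paskm_E m \<beta> a b sel \<delta> \<alpha> \<omega> \<gamma> x0 0
               (\<lambda>(x, v). (dist_P (polyh m a b) v)\<^sup>2 + \<zeta> * \<mu>1 * (dist_P (polyh m a b) x)\<^sup>2))
       \<and> paskm_E m \<beta> a b sel \<delta> \<alpha> \<omega> \<gamma> x0 0
               (\<lambda>(x, v). (dist_P (polyh m a b) v)\<^sup>2 + \<zeta> * \<mu>1 * (dist_P (polyh m a b) x)\<^sup>2)
         = (1 + \<zeta> * \<mu>1) * (dist_P (polyh m a b) x0)\<^sup>2
       \<and> ((\<lambda>k. paskm_E m \<beta> a b sel \<delta> \<alpha> \<omega> \<gamma> x0 k (\<lambda>(x, v). (dist_P (polyh m a b) x)\<^sup>2))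
            \<longlonglongrightarrow> 0)
       \<and> ((\<lambda>k. paskm_E m \<beta> a b sel \<delta> \<alpha> \<omega> \<gamma> x0 k (\<lambda>(x, v). (dist_P (polyh m a b) v)\<^sup>2))
            \<longlonglongrightarrow> 0)"
proof -
  interpret paskm_setting m \<beta> a b L \<mu>1 \<delta> \<eta> \<zeta> \<gamma> \<alpha> \<omega> x0 sel
    by unfold_locales (fact assms)+
  have \<Phi>: "(\<lambda>(x, v). (dist_P P v)\<^sup>2 + \<zeta> * \<mu>1 * (dist_P P x)\<^sup>2) = \<Phi>"
    by (simp add: lyapunov_def)
  have "(\<lambda>k. E k (\<lambda>(x, v). (dist_P P x)\<^sup>2)) \<longlonglongrightarrow> 0"
    using zeta(1) mu1_pos
    by (intro paskm_E_tendsto_0[where C = "1 / (\<zeta> * \<mu>1)"])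
       (auto simp: lyapunov_def field_simps split: prod.splits)
  moreover have "(\<lambda>k. E k (\<lambda>(x, v). (dist_P P v)\<^sup>2)) \<longlonglongrightarrow> 0"
    using zeta(1) mu1_pos
    by (intro paskm_E_tendsto_0[where C = 1]) (auto simp: lyapunov_def split: prod.splits)
  ultimately show ?thesis
    unfolding \<Phi> using paskm_E_lyapunov_le paskm_E_lyapunov_0 by blast
qed

end
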